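(* Let $(X,M,N)$ be a localizable enhanced measurable space. Composition with the quotient map $M\to M/N$ is a bijection from the set of (complex) continuous valuations on the Boolean algebra $M/N$ onto the set of finite essential measures on $(X,M,N)$.
   Context: Enhanced measurable space: $(X,M,N)$ with $M$ a $\sigma$-algebra on $X$ and $N\subset M$ closed under arbitrary subsets and countable unions; localizable if $M/N$ is complete and $1$ is the supremum of all $a\in M/N$ such that $\{b\le a\}$ admits a faithful $[0,\infty)$-valued continuous valuation. A complex valuation on a lattice $L$ is $\nu:L\to\mathbb{C}$ with $\nu(0)=0$, $\nu(x)+\nu(y)=\nu(x\vee y)+\nu(x\wedge y)$; continuous if $\nu(\sup I)=\lim_{x\in I}\nu(x)$ for directed $I$. A finite measure is a countably additive map $\mu:M\to\mathbb{C}$ vanishing on $N$; $\mu|_m$ is its restriction to measurable subsets of $m$. $m\in M$ is $\sigma$-finite if the induced space on $m$ admits a finite measure $\nu$ with $\nu|_{m''}=0\Rightarrow m''\in N$. A finite measure $\mu$ is essential if for every $m\in M$ with $\mu|_m\neq0$ there is a $\sigma$-finite $m'\in M$, $m'\subset m$, with $\mu|_{m'}\ne0$. *)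

theory Defs
  imports "HOL-Analysis.Analysis" "HOL-Library.FuncSet"
begin

definition enhanced_measurable_space :: "'a set \<Rightarrow> 'a set set \<Rightarrow> 'a set set \<Rightarrow> bool" where
  "enhanced_measurable_space X M N \<longleftrightarrow>
     sigma_algebra X M \<and> N \<subseteq> M \<and>
     (\<forall>A\<in>N. \<forall>B. B \<subseteq> A \<longrightarrow> B \<in> N) \<and>
     (\<forall>C. countable C \<and> C \<subseteq> N \<longrightarrow> \<Union>C \<in> N)"

definition qcls :: "'a set set \<Rightarrow> 'a set set \<Rightarrow> 'a set \<Rightarrow> 'a set set" where
  "qcls M N a = {b \<in> M. (a - b) \<union> (b - a) \<in> N}"

definition quot :: "'a set set \<Rightarrow> 'a set set \<Rightarrow> 'a set set set" where
  "quot M N = qcls M N ` M"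

text \<open>Order of M/N: [a] \<le> [b] iff a - b is null (independent of representatives).\<close>
definition qle :: "'a set set \<Rightarrow> 'a set set \<Rightarrow> 'a set set \<Rightarrow> bool" where
  "qle N A B \<longleftrightarrow> (\<exists>a\<in>A. \<exists>b\<in>B. a - b \<in> N)"

definition is_lub :: "'b set \<Rightarrow> ('b \<Rightarrow> 'b \<Rightarrow> bool) \<Rightarrow> 'b set \<Rightarrow> 'b \<Rightarrow> bool" where
  "is_lub L le S s \<longleftrightarrow> s \<in> L \<and> (\<forall>x\<in>S. le x s) \<and> (\<forall>u\<in>L. (\<forall>x\<in>S. le x u) \<longrightarrow> le s u)"

definition is_glb :: "'b set \<Rightarrow> ('b \<Rightarrow> 'b \<Rightarrow> bool) \<Rightarrow> 'b set \<Rightarrow> 'b \<Rightarrow> bool" where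
  "is_glb L le S s \<longleftrightarrow> s \<in> L \<and> (\<forall>x\<in>S. le s x) \<and> (\<forall>u\<in>L. (\<forall>x\<in>S. le u x) \<longrightarrow> le u s)"

definition lsup :: "'b set \<Rightarrow> ('b \<Rightarrow> 'b \<Rightarrow> bool) \<Rightarrow> 'b set \<Rightarrow> 'b" where
  "lsup L le S = (THE s. is_lub L le S s)"

definition linf :: "'b set \<Rightarrow> ('b \<Rightarrow> 'b \<Rightarrow> bool) \<Rightarrow> 'b set \<Rightarrow> 'b" where
  "linf L le S = (THE s. is_glb L le S s)"

definition lbot :: "'b set \<Rightarrow> ('b \<Rightarrow> 'b \<Rightarrow> bool) \<Rightarrow> 'b" where
  "lbot L le = lsup L le {}"

definition directed_in :: "'b set \<Rightarrow> ('b \<Rightarrow> 'b \<Rightarrow> bool) \<Rightarrow> 'b set \<Rightarrow> bool" where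
  "directed_in L le I \<longleftrightarrow> I \<subseteq> L \<and> I \<noteq> {} \<and> (\<forall>x\<in>I. \<forall>y\<in>I. \<exists>z\<in>I. le x z \<and> le y z)"

text \<open>The filter of the net indexed by a directed set I.\<close>
definition directed_filter :: "('b \<Rightarrow> 'b \<Rightarrow> bool) \<Rightarrow> 'b set \<Rightarrow> 'b filter" where
  "directed_filter le I = (INF x\<in>I. principal {y\<in>I. le x y})"

definition valuation_on :: "'b set \<Rightarrow> ('b \<Rightarrow> 'b \<Rightarrow> bool) \<Rightarrow> ('b \<Rightarrow> 'c::{comm_monoid_add}) \<Rightarrow> bool" where
  "valuation_on L le \<nu> \<longleftrightarrow> \<nu> (lbot L le) = 0 \<and>
     (\<forall>x\<in>L. \<forall>y\<in>L. \<nu> x + \<nu> y = \<nu> (lsup L le {x, y}) + \<nu> (linf L le {x, y}))"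

definition continuous_valuation_on ::
    "'b set \<Rightarrow> ('b \<Rightarrow> 'b \<Rightarrow> bool) \<Rightarrow> ('b \<Rightarrow> 'c::{comm_monoid_add, topological_space}) \<Rightarrow> bool" where
  "continuous_valuation_on L le \<nu> \<longleftrightarrow> valuation_on L le \<nu> \<and>
     (\<forall>I. directed_in L le I \<longrightarrow> (\<nu> \<longlongrightarrow> \<nu> (lsup L le I)) (directed_filter le I))"

definition quot_complete :: "'a set set \<Rightarrow> 'a set set \<Rightarrow> bool" where
  "quot_complete M N \<longleftrightarrow> (\<forall>S \<subseteq> quot M N. \<exists>s. is_lub (quot M N) (qle N) S s)"

definition has_faithful_valuation_below :: "'a set set \<Rightarrow> 'a set set \<Rightarrow> 'a set set \<Rightarrow> bool" where
  "has_faithful_valuation_below M N a \<longleftrightarrow>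
     (let D = {b \<in> quot M N. qle N b a} in
      \<exists>\<nu> :: 'a set set \<Rightarrow> real.
        continuous_valuation_on D (qle N) \<nu> \<and>
        (\<forall>b\<in>D. \<nu> b \<ge> 0) \<and>
        (\<forall>b\<in>D. \<nu> b = 0 \<longrightarrow> b = qcls M N {}))"

definition localizable :: "'a set \<Rightarrow> 'a set set \<Rightarrow> 'a set set \<Rightarrow> bool" where
  "localizable X M N \<longleftrightarrow> quot_complete M N \<and>
     is_lub (quot M N) (qle N) {a \<in> quot M N. has_faithful_valuation_below M N a} (qcls M N X)"

definition finite_measure_on :: "'a set set \<Rightarrow> 'a set set \<Rightarrow> ('a set \<Rightarrow> complex) \<Rightarrow> bool" where
  "finite_measure_on M N \<mu> \<longleftrightarrow>
     (\<forall>A :: nat \<Rightarrow> 'a set. range A \<subseteq> M \<longrightarrow> disjoint_family A \<longrightarrow>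
        (\<lambda>n. \<mu> (A n)) sums \<mu> (\<Union>(range A))) \<and>
     (\<forall>A\<in>N. \<mu> A = 0)"

definition restr_zero :: "'a set set \<Rightarrow> ('a set \<Rightarrow> complex) \<Rightarrow> 'a set \<Rightarrow> bool" where
  "restr_zero M \<mu> m \<longleftrightarrow> (\<forall>s\<in>M. s \<subseteq> m \<longrightarrow> \<mu> s = 0)"

definition sigma_finite_set :: "'a set set \<Rightarrow> 'a set set \<Rightarrow> 'a set \<Rightarrow> bool" where
  "sigma_finite_set M N m \<longleftrightarrow>
     (\<exists>\<nu>. finite_measure_on {s \<in> M. s \<subseteq> m} {s \<in> N. s \<subseteq> m} \<nu> \<and>
        (\<forall>m''\<in>M. m'' \<subseteq> m \<longrightarrow> restr_zero M \<nu> m'' \<longrightarrow> m'' \<in> N))"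

definition essential :: "'a set set \<Rightarrow> 'a set set \<Rightarrow> ('a set \<Rightarrow> complex) \<Rightarrow> bool" where
  "essential M N \<mu> \<longleftrightarrow>
     (\<forall>m\<in>M. \<not> restr_zero M \<mu> m \<longrightarrow>
        (\<exists>m'\<in>M. m' \<subseteq> m \<and> sigma_finite_set M N m' \<and> \<not> restr_zero M \<mu> m'))"

end

theory Submission
  imports Defs
begin

(*
  A continuous valuation \<nu> on M/N is modular and continuous along increasing sequences, so
  m \<mapsto> \<nu>[m] is countably additive, and it vanishes on N. It is essential: by localizability [X]
  is the supremum of the classes carrying a faithful valuation, so every [s] is the directed
  supremum of its traces on finite joins of such classes; continuity of \<nu> detects a nonzero
  value on one of these traces, and a trace on finitely many faithfully valued classes is
  \<sigma>-finite.

  Conversely an essential finite measure \<mu> is constant on classes and modular, so it defines a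
  valuation on M/N. For continuity at a directed family I with supremum [s], dominate |\<mu>| by a
  finite positive measure \<lambda> with the same null sets (the sum of the positive variations of
  \<plusminus>Re \<mu> and \<plusminus>Im \<mu>). A countable exhaustion gives x\<^sub>n \<in> I whose union covers s up to a
  \<lambda>-null set: otherwise essentiality yields a \<sigma>-finite m \<subseteq> s with \<lambda>(m) > 0 disjoint from
  that union, and exhausting m with its faithful measure shows that m is covered by I up to N,
  hence \<lambda>-null. Directedness then gives \<lambda>(s - x) \<rightarrow> 0 along I, which bounds
  |\<mu>(s) - \<mu>(x)|.
*)

section \<open>Countably additive set functions\<close>

definition sigma_additive :: "'a set set \<Rightarrow> ('a set \<Rightarrow> 'b::real_normed_vector) \<Rightarrow> bool" where
  "sigma_additive S f \<longleftrightarrow> (\<forall>A :: nat \<Rightarrow> 'a set. range A \<subseteq> S \<longrightarrow> disjoint_family A \<longrightarrow>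
      (\<lambda>n. f (A n)) sums f (\<Union>(range A)))"

lemma finite_measure_on_iff: "finite_measure_on M N \<mu> \<longleftrightarrow> sigma_additive M \<mu> \<and> (\<forall>A\<in>N. \<mu> A = 0)"
  unfolding finite_measure_on_def sigma_additive_def ..

lemma sigma_additive_subset: "S' \<subseteq> S \<Longrightarrow> sigma_additive S f \<Longrightarrow> sigma_additive S' f"
  unfolding sigma_additive_def by blast

context
  fixes \<Omega> :: "'a set" and S :: "'a set set"
  assumes S: "sigma_algebra \<Omega> S"
begin

interpretation sigma_algebra \<Omega> S by (fact S)

lemma sigma_additive_cong:
  assumes "\<And>E. E \<in> S \<Longrightarrow> f E = g E" "sigma_additive S f"
  shows "sigma_additive S g"
  unfolding sigma_additive_def
proof (intro allI impI)
  fix A :: "nat \<Rightarrow> 'a set" assume A: "range A \<subseteq> S" "disjoint_family A"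
  then have "(\<lambda>n. f (A n)) sums f (\<Union>(range A))" using assms(2) unfolding sigma_additive_def by blast
  moreover have "\<Union>(range A) \<in> S" using A(1) by blast
  moreover have "(\<lambda>n. g (A n)) = (\<lambda>n. f (A n))" using A(1) assms(1) by (auto simp: image_subset_iff)
  ultimately show "(\<lambda>n. g (A n)) sums g (\<Union>(range A))" using assms(1) by simp
qed

lemma sigma_additive_empty:
  assumes "sigma_additive S f" shows "f {} = 0"
proof -
  have "(\<lambda>n. f {}) sums f {}"
    using assms[unfolded sigma_additive_def, rule_format, of "\<lambda>_. {}"]
    by (simp add: disjoint_family_on_def)
  then have "(\<lambda>n. f {}) \<longlonglongrightarrow> 0"
    by (intro summable_LIMSEQ_zero sums_summable)
  then show ?thesis by (simp add: LIMSEQ_const_iff)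
qed

lemma sigma_additive_Un:
  assumes f: "sigma_additive S f" and AB: "A \<in> S" "B \<in> S" "A \<inter> B = {}"
  shows "f (A \<union> B) = f A + f B"
proof -
  define C where "C n = (if n = 0 then A else if n = 1 then B else {})" for n :: nat
  have "range C \<subseteq> S" "disjoint_family C" "\<Union>(range C) = A \<union> B"
    using AB by (auto simp: C_def disjoint_family_on_def split: if_splits)
  then have "(\<lambda>n. f (C n)) sums f (A \<union> B)"
    using f unfolding sigma_additive_def by metis
  moreover have "(\<lambda>n. f (C n)) sums (\<Sum>n\<in>{0, 1}. f (C n))"
    by (rule sums_finite) (auto simp: C_def sigma_additive_empty[OF f])
  ultimately show ?thesis by (simp add: C_def sums_iff)
qed

lemma sigma_additive_Int_Diff:
  assumes "sigma_additive S f" "A \<in> S" "B \<in> S"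
  shows "f A = f (A \<inter> B) + f (A - B)"
proof -
  have "f ((A \<inter> B) \<union> (A - B)) = f (A \<inter> B) + f (A - B)"
    using assms by (intro sigma_additive_Un) auto
  then show ?thesis by (simp add: Int_Diff_Un)
qed

lemma sigma_additive_unbounded_split:
  fixes f :: "'a set \<Rightarrow> real"
  assumes f: "sigma_additive S f" and A: "A \<in> S" "\<not> bdd_above (f ` (S \<inter> Pow A))"
  shows "\<exists>B\<in>S. B \<subseteq> A \<and> \<not> bdd_above (f ` (S \<inter> Pow B)) \<and> c < \<bar>f B\<bar>"
proof -
  obtain E where E: "E \<in> S" "E \<subseteq> A" "\<bar>f A\<bar> + c < f E"
    using A(2) unfolding bdd_above_def by (auto simp: not_le)
  show ?thesis
  proof (cases "bdd_above (f ` (S \<inter> Pow E))")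
    case False
    moreover have "c < \<bar>f E\<bar>" using E(3) by linarith
    ultimately show ?thesis using E(1,2) by (intro bexI[of _ E] conjI)
  next
    case True
    have "\<not> bdd_above (f ` (S \<inter> Pow (A - E)))"
    proof
      assume "bdd_above (f ` (S \<inter> Pow (A - E)))"
      with True obtain a b where a: "\<forall>F\<in>S \<inter> Pow E. f F \<le> a"
        and b: "\<forall>F\<in>S \<inter> Pow (A - E). f F \<le> b"
        unfolding bdd_above_def by blast
      have "f F \<le> a + b" if "F \<in> S \<inter> Pow A" for F
      proof -
        have "f F = f (F \<inter> E) + f (F - E)"
          using sigma_additive_Int_Diff[OF f] that E(1) by blast
        also have "\<dots> \<le> a + b"
          using a b that E(1) by (intro add_mono) auto
        finally show ?thesis .
      qed
      with A(2) show False unfolding bdd_above_def by auto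
    qed
    moreover have "f A = f E + f (A - E)"
      using sigma_additive_Int_Diff[OF f A(1) E(1)] E(2) by (simp add: Int_absorb1)
    then have "c < \<bar>f (A - E)\<bar>" using E(3) by linarith
    ultimately show ?thesis using A(1) E(1) by (intro bexI[of _ "A - E"] conjI) auto
  qed
qed

lemma sigma_additive_decseq_convergent:
  assumes f: "sigma_additive S f" and B: "\<And>n. B n \<in> S" "decseq B"
  shows "convergent (\<lambda>n. f (B n))"
proof -
  define D where "D n = B n - B (Suc n)" for n
  have "disjoint_family D"
  proof (unfold disjoint_family_on_def, intro ballI impI)
    fix m n :: nat assume "m \<noteq> n"
    then have "B (max m n) \<subseteq> B (Suc (min m n))" by (intro decseqD[OF B(2)]) linarith
    then show "D m \<inter> D n = {}" unfolding D_def by (cases "m \<le> n") (auto simp: max_def min_def)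
  qed
  moreover have "range D \<subseteq> S" using B(1) by (auto simp: D_def)
  ultimately have "(\<lambda>n. f (D n)) sums f (\<Union>(range D))"
    using f unfolding sigma_additive_def by blast
  then have "convergent (\<lambda>n. \<Sum>k<n. f (D k))"
    unfolding sums_def convergent_def by blast
  then have "convergent (\<lambda>n. f (B 0) - (\<Sum>k<n. f (D k)))"
    by (intro convergent_diff convergent_const)
  moreover have "(\<lambda>n. f (B n)) = (\<lambda>n. f (B 0) - (\<Sum>k<n. f (D k)))"
  proof
    fix n show "f (B n) = f (B 0) - (\<Sum>k<n. f (D k))"
    proof (induction n)
      case (Suc n)
      have "f (B (Suc n)) = f (B n) - f (D n)"
        using sigma_additive_Int_Diff[OF f B(1) B(1), of n "Suc n"] decseqD[OF B(2), of n "Suc n"]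
        by (simp add: D_def Int_absorb1 eq_diff_eq)
      with Suc show ?case by (simp add: diff_diff_eq)
    qed simp
  qed
  ultimately show ?thesis by metis
qed

lemma sigma_additive_bdd_above:
  fixes f :: "'a set \<Rightarrow> real"
  assumes f: "sigma_additive S f"
  shows "bdd_above (f ` S)"
proof (rule ccontr)
  assume "\<not> bdd_above (f ` S)"
  moreover have "S \<inter> Pow \<Omega> = S" using sets_into_space by auto
  ultimately have start: "\<Omega> \<in> S \<and> \<not> bdd_above (f ` (S \<inter> Pow \<Omega>))" by simp
  (* Splitting off unbounded parts with ever larger |f| gives a decreasing sequence along which
     f diverges. *)
  have "\<exists>B. \<forall>n. (B n \<in> S \<and> \<not> bdd_above (f ` (S \<inter> Pow (B n)))) \<and>
      B (Suc n) \<subseteq> B n \<and> real n < \<bar>f (B (Suc n))\<bar>"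
  proof (rule dependent_nat_choice[where P="\<lambda>_ B. B \<in> S \<and> \<not> bdd_above (f ` (S \<inter> Pow B))"
        and Q="\<lambda>n B B'. B' \<subseteq> B \<and> real n < \<bar>f B'\<bar>"])
    fix B n assume "B \<in> S \<and> \<not> bdd_above (f ` (S \<inter> Pow B))"
    then show "\<exists>B'. (B' \<in> S \<and> \<not> bdd_above (f ` (S \<inter> Pow B'))) \<and> B' \<subseteq> B \<and> real n < \<bar>f B'\<bar>"
      using sigma_additive_unbounded_split[OF f, of B "real n"] by metis
  qed (use start in auto)
  then obtain B where B: "\<forall>n. (B n \<in> S \<and> \<not> bdd_above (f ` (S \<inter> Pow (B n)))) \<and>
      B (Suc n) \<subseteq> B n \<and> real n < \<bar>f (B (Suc n))\<bar>" ..
  then have "\<And>n. B n \<in> S" "decseq B" and big: "\<And>n. real n < \<bar>f (B (Suc n))\<bar>"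
    by (simp_all add: decseq_Suc_iff)
  then have "convergent (\<lambda>n. f (B n))" by (intro sigma_additive_decseq_convergent[OF f])
  then obtain K where K: "\<And>n. \<bar>f (B n)\<bar> \<le> K"
    by (metis convergent_imp_Bseq BseqE real_norm_def)
  obtain n :: nat where "K < real n" using reals_Archimedean2 by blast
  with big[of n] K[of "Suc n"] show False by linarith
qed

end

definition pos_variation :: "'a set set \<Rightarrow> ('a set \<Rightarrow> real) \<Rightarrow> 'a set \<Rightarrow> real" where
  "pos_variation S f A = (SUP E\<in>S \<inter> Pow A. f E)"

context
  fixes \<Omega> :: "'a set" and S :: "'a set set" and f :: "'a set \<Rightarrow> real"
  assumes S: "sigma_algebra \<Omega> S" and f: "sigma_additive S f"
begin

interpretation sigma_algebra \<Omega> S by (fact S)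

lemma pos_variation_upper: "E \<in> S \<Longrightarrow> E \<subseteq> A \<Longrightarrow> f E \<le> pos_variation S f A"
  unfolding pos_variation_def
  by (rule cSUP_upper) (auto intro: bdd_above_mono[OF sigma_additive_bdd_above[OF S f]])

lemma pos_variation_least: "(\<And>E. E \<in> S \<Longrightarrow> E \<subseteq> A \<Longrightarrow> f E \<le> c) \<Longrightarrow> pos_variation S f A \<le> c"
  unfolding pos_variation_def by (rule cSUP_least) auto

lemma pos_variation_nonneg: "0 \<le> pos_variation S f A"
  using pos_variation_upper[of "{}" A] sigma_additive_empty[OF S f] by simp

lemma pos_variation_mono: "B \<subseteq> A \<Longrightarrow> pos_variation S f B \<le> pos_variation S f A"
  by (blast intro: pos_variation_least pos_variation_upper)

lemma pos_variation_Un: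
  assumes AB: "A \<in> S" "A \<inter> B = {}"
  shows "pos_variation S f (A \<union> B) = pos_variation S f A + pos_variation S f B"
proof (rule antisym)
  show "pos_variation S f (A \<union> B) \<le> pos_variation S f A + pos_variation S f B"
  proof (rule pos_variation_least)
    fix E assume E: "E \<in> S" "E \<subseteq> A \<union> B"
    have "f E = f (E \<inter> A) + f (E - A)" by (rule sigma_additive_Int_Diff[OF S f E(1) AB(1)])
    also have "\<dots> \<le> pos_variation S f A + pos_variation S f B"
      using E AB by (intro add_mono pos_variation_upper) auto
    finally show "f E \<le> pos_variation S f A + pos_variation S f B" .
  qed
next
  have "pos_variation S f A \<le> pos_variation S f (A \<union> B) - pos_variation S f B"
  proof (rule pos_variation_least)
    fix E assume E: "E \<in> S" "E \<subseteq> A"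
    have "pos_variation S f B \<le> pos_variation S f (A \<union> B) - f E"
    proof (rule pos_variation_least)
      fix F assume F: "F \<in> S" "F \<subseteq> B"
      have "E \<inter> F = {}" using E F AB by blast
      then have "f E + f F = f (E \<union> F)"
        using sigma_additive_Un[OF S f E(1) F(1)] by simp
      also have "\<dots> \<le> pos_variation S f (A \<union> B)"
        using E F by (intro pos_variation_upper) auto
      finally show "f F \<le> pos_variation S f (A \<union> B) - f E" by simp
    qed
    then show "f E \<le> pos_variation S f (A \<union> B) - pos_variation S f B" by simp
  qed
  then show "pos_variation S f A + pos_variation S f B \<le> pos_variation S f (A \<union> B)" by simp
qed

lemma sigma_additive_pos_variation: "sigma_additive S (pos_variation S f)"
  unfolding sigma_additive_def
proof (intro allI impI)
  fix A :: "nat \<Rightarrow> 'a set" assume A: "range A \<subseteq> S" "disjoint_family A"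
  then have AS: "A n \<in> S" for n by blast
  let ?g = "pos_variation S f"
  have partial: "(\<Sum>k<n. ?g (A k)) = ?g (\<Union>k<n. A k)" for n
  proof (induction n)
    case (Suc n)
    have "(\<Union>k<n. A k) \<inter> A n = {}"
      using A(2) unfolding disjoint_family_on_def by (fastforce dest: less_imp_neq)
    moreover have "(\<Union>k<n. A k) \<in> S" using A(1) by auto
    moreover have "(\<Union>k<Suc n. A k) = (\<Union>k<n. A k) \<union> A n" by (auto simp: lessThan_Suc)
    ultimately have "?g (\<Union>k<Suc n. A k) = ?g (\<Union>k<n. A k) + ?g (A n)"
      by (simp add: pos_variation_Un)
    with Suc show ?case by simp
  qed (simp add: pos_variation_def sigma_additive_empty[OF S f])
  then have bound: "(\<Sum>k<n. ?g (A k)) \<le> ?g (\<Union>(range A))" for n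
    by (auto intro: pos_variation_mono)
  have summable: "summable (\<lambda>k. ?g (A k))"
    using bound by (intro summableI_nonneg_bounded pos_variation_nonneg)
  have "?g (\<Union>(range A)) \<le> (\<Sum>k. ?g (A k))"
  proof (rule pos_variation_least)
    fix E assume E: "E \<in> S" "E \<subseteq> \<Union>(range A)"
    have "range (\<lambda>n. E \<inter> A n) \<subseteq> S" "disjoint_family (\<lambda>n. E \<inter> A n)"
      using E(1) A by (auto simp: disjoint_family_on_def)
    then have "(\<lambda>n. f (E \<inter> A n)) sums f (\<Union>n. E \<inter> A n)"
      using f unfolding sigma_additive_def by blast
    moreover have "(\<Union>n. E \<inter> A n) = E" using E(2) by auto
    ultimately have "f E = (\<Sum>n. f (E \<inter> A n))" by (simp add: sums_iff)
    also have "\<dots> \<le> (\<Sum>n. ?g (A n))"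
      using \<open>(\<lambda>n. f (E \<inter> A n)) sums _\<close> summable E AS
      by (intro suminf_le pos_variation_upper) (auto simp: sums_iff)
    finally show "f E \<le> (\<Sum>k. ?g (A k))" .
  qed
  moreover have "(\<Sum>k. ?g (A k)) \<le> ?g (\<Union>(range A))"
    by (rule suminf_le_const[OF summable bound])
  ultimately show "(\<lambda>n. ?g (A n)) sums ?g (\<Union>(range A))"
    using summable by (simp add: summable_sums antisym)
qed

end

lemma sigma_additive_measure_of:
  fixes f :: "'a set \<Rightarrow> real"
  assumes S: "sigma_algebra \<Omega> S" and f: "sigma_additive S f" and nonneg: "\<And>E. E \<in> S \<Longrightarrow> 0 \<le> f E"
  defines "L \<equiv> measure_of \<Omega> S (\<lambda>E. ennreal (f E))"
  shows "finite_measure L" "sets L = S" "\<And>E. E \<in> S \<Longrightarrow> measure L E = f E"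
proof -
  interpret sigma_algebra \<Omega> S by (fact S)
  have "positive S (\<lambda>E. ennreal (f E))"
    by (simp add: positive_def sigma_additive_empty[OF S f])
  moreover have "countably_additive S (\<lambda>E. ennreal (f E))"
    unfolding countably_additive_def
  proof (intro allI impI)
    fix A :: "nat \<Rightarrow> 'a set" assume A: "range A \<subseteq> S" "disjoint_family A" "\<Union>(range A) \<in> S"
    then have "(\<lambda>n. f (A n)) sums f (\<Union>(range A))" using f unfolding sigma_additive_def by blast
    then show "(\<Sum>n. ennreal (f (A n))) = ennreal (f (\<Union>(range A)))"
      using nonneg A(1) by (subst suminf_ennreal2) (auto simp: sums_iff)
  qed
  ultimately have emeasure_L: "emeasure L E = ennreal (f E)" if "E \<in> S" for E
    unfolding L_def using emeasure_measure_of_sigma[OF S _ _ that] by blast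
  show sets_L: "sets L = S"
    unfolding L_def using sets_measure_of[OF space_closed] sigma_sets_eq by simp
  have "space L = \<Omega>"
    unfolding L_def using space_closed by (rule space_measure_of)
  then show "finite_measure L"
    by (intro finite_measureI) (simp add: emeasure_L)
  show "measure L E = f E" if "E \<in> S" for E
    using emeasure_L[OF that] nonneg[OF that] by (simp add: measure_def)
qed

lemma sigma_additive_Re_Im:
  fixes \<mu> :: "'a set \<Rightarrow> complex"
  assumes "sigma_additive S \<mu>"
  shows "sigma_additive S (\<lambda>E. Re (\<mu> E))" "sigma_additive S (\<lambda>E. - Re (\<mu> E))"
    "sigma_additive S (\<lambda>E. Im (\<mu> E))" "sigma_additive S (\<lambda>E. - Im (\<mu> E))"
  using assms unfolding sigma_additive_def by (auto intro!: sums_Re sums_Im sums_minus)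

definition complex_variation :: "'a set set \<Rightarrow> ('a set \<Rightarrow> complex) \<Rightarrow> 'a set \<Rightarrow> real" where
  "complex_variation S \<mu> E =
     pos_variation S (\<lambda>F. Re (\<mu> F)) E + pos_variation S (\<lambda>F. - Re (\<mu> F)) E +
     pos_variation S (\<lambda>F. Im (\<mu> F)) E + pos_variation S (\<lambda>F. - Im (\<mu> F)) E"

context
  fixes \<Omega> :: "'a set" and S :: "'a set set" and \<mu> :: "'a set \<Rightarrow> complex"
  assumes S: "sigma_algebra \<Omega> S" and \<mu>: "sigma_additive S \<mu>"
begin

lemma complex_variation_nonneg: "0 \<le> complex_variation S \<mu> E"
  unfolding complex_variation_def using sigma_additive_Re_Im[OF \<mu>]
  by (intro add_nonneg_nonneg pos_variation_nonneg[OF S])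

lemma sigma_additive_complex_variation: "sigma_additive S (complex_variation S \<mu>)"
proof (unfold sigma_additive_def, intro allI impI)
  fix A :: "nat \<Rightarrow> 'a set" assume A: "range A \<subseteq> S" "disjoint_family A"
  have "sigma_additive S (pos_variation S (\<lambda>F. Re (\<mu> F)))"
    "sigma_additive S (pos_variation S (\<lambda>F. - Re (\<mu> F)))"
    "sigma_additive S (pos_variation S (\<lambda>F. Im (\<mu> F)))"
    "sigma_additive S (pos_variation S (\<lambda>F. - Im (\<mu> F)))"
    using sigma_additive_Re_Im[OF \<mu>] by (auto intro: sigma_additive_pos_variation[OF S])
  then show "(\<lambda>n. complex_variation S \<mu> (A n)) sums complex_variation S \<mu> (\<Union>(range A))"
    using A unfolding complex_variation_def sigma_additive_def by (intro sums_add) blast+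
qed

lemma cmod_le_complex_variation:
  assumes "E \<in> S"
  shows "cmod (\<mu> E) \<le> complex_variation S \<mu> E"
proof -
  note upper = pos_variation_upper[OF S _ assms order_refl]
  note nonneg = pos_variation_nonneg[OF S, of _ E]
  have "\<bar>Re (\<mu> E)\<bar> \<le> pos_variation S (\<lambda>F. Re (\<mu> F)) E + pos_variation S (\<lambda>F. - Re (\<mu> F)) E"
    "\<bar>Im (\<mu> E)\<bar> \<le> pos_variation S (\<lambda>F. Im (\<mu> F)) E + pos_variation S (\<lambda>F. - Im (\<mu> F)) E"
    using upper[OF sigma_additive_Re_Im(1)[OF \<mu>]] upper[OF sigma_additive_Re_Im(2)[OF \<mu>]]
      upper[OF sigma_additive_Re_Im(3)[OF \<mu>]] upper[OF sigma_additive_Re_Im(4)[OF \<mu>]]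
      nonneg[OF sigma_additive_Re_Im(1)[OF \<mu>]] nonneg[OF sigma_additive_Re_Im(2)[OF \<mu>]]
      nonneg[OF sigma_additive_Re_Im(3)[OF \<mu>]] nonneg[OF sigma_additive_Re_Im(4)[OF \<mu>]]
    by linarith+
  then show ?thesis using cmod_le[of "\<mu> E"] unfolding complex_variation_def by linarith
qed

lemma complex_variation_eq_0_iff:
  assumes "E \<in> S"
  shows "complex_variation S \<mu> E = 0 \<longleftrightarrow> restr_zero S \<mu> E"
proof
  note nonneg = pos_variation_nonneg[OF S, of _ E]
  assume "complex_variation S \<mu> E = 0"
  then have zero: "pos_variation S (\<lambda>F. Re (\<mu> F)) E = 0" "pos_variation S (\<lambda>F. - Re (\<mu> F)) E = 0"
    "pos_variation S (\<lambda>F. Im (\<mu> F)) E = 0" "pos_variation S (\<lambda>F. - Im (\<mu> F)) E = 0"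
    using nonneg[OF sigma_additive_Re_Im(1)[OF \<mu>]] nonneg[OF sigma_additive_Re_Im(2)[OF \<mu>]]
      nonneg[OF sigma_additive_Re_Im(3)[OF \<mu>]] nonneg[OF sigma_additive_Re_Im(4)[OF \<mu>]]
    unfolding complex_variation_def by linarith+
  show "restr_zero S \<mu> E"
  proof (unfold restr_zero_def, intro ballI impI)
    fix F assume F: "F \<in> S" "F \<subseteq> E"
    note upper = pos_variation_upper[OF S _ F]
    have "Re (\<mu> F) \<le> 0" "- Re (\<mu> F) \<le> 0" "Im (\<mu> F) \<le> 0" "- Im (\<mu> F) \<le> 0"
      using upper[OF sigma_additive_Re_Im(1)[OF \<mu>]] upper[OF sigma_additive_Re_Im(2)[OF \<mu>]]
        upper[OF sigma_additive_Re_Im(3)[OF \<mu>]] upper[OF sigma_additive_Re_Im(4)[OF \<mu>]]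
      by (simp_all add: zero)
    then show "\<mu> F = 0" by (simp add: complex_eq_iff)
  qed
next
  assume "restr_zero S \<mu> E"
  then have "\<mu> F = 0" if "F \<in> S" "F \<subseteq> E" for F using that unfolding restr_zero_def by blast
  then have "pos_variation S (\<lambda>F. Re (\<mu> F)) E \<le> 0" "pos_variation S (\<lambda>F. - Re (\<mu> F)) E \<le> 0"
    "pos_variation S (\<lambda>F. Im (\<mu> F)) E \<le> 0" "pos_variation S (\<lambda>F. - Im (\<mu> F)) E \<le> 0"
    using sigma_additive_Re_Im[OF \<mu>] by (auto intro!: pos_variation_least[OF S])
  then show "complex_variation S \<mu> E = 0"
    using complex_variation_nonneg[of E] unfolding complex_variation_def by linarith
qed

lemma complex_sigma_additive_dominating_measure:
  obtains L where "finite_measure L" "sets L = S" "\<And>E. E \<in> S \<Longrightarrow> cmod (\<mu> E) \<le> measure L E"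
    "null_sets L = {E \<in> S. restr_zero S \<mu> E}"
proof -
  define L where "L = measure_of \<Omega> S (\<lambda>E. ennreal (complex_variation S \<mu> E))"
  have L: "finite_measure L" "sets L = S" "\<And>E. E \<in> S \<Longrightarrow> measure L E = complex_variation S \<mu> E"
    unfolding L_def using sigma_additive_measure_of[OF S sigma_additive_complex_variation]
      complex_variation_nonneg by auto
  show ?thesis
  proof
    show "cmod (\<mu> E) \<le> measure L E" if "E \<in> S" for E
      using cmod_le_complex_variation[OF that] L(3)[OF that] by simp
    show "null_sets L = {E \<in> S. restr_zero S \<mu> E}"
      using L complex_variation_eq_0_iff
      by (auto simp: null_sets_def finite_measure.emeasure_eq_measure)
  qed (use L in auto)
qed

end

lemma (in finite_measure) countable_UN_max_measure:
  assumes "A ` I \<subseteq> sets M"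
  obtains J where "countable J" "J \<subseteq> I"
    "\<And>J'. countable J' \<Longrightarrow> J' \<subseteq> I \<Longrightarrow> measure M (\<Union>j\<in>J'. A j) \<le> measure M (\<Union>j\<in>J. A j)"
proof -
  define \<J> where "\<J> = {J. countable J \<and> J \<subseteq> I}"
  let ?m = "\<lambda>J. measure M (\<Union>j\<in>J. A j)"
  define c where "c = (SUP J\<in>\<J>. ?m J)"
  have bdd: "bdd_above (?m ` \<J>)"
    by (intro bdd_aboveI2[where M="measure M (space M)"] bounded_measure)
  have "{} \<in> \<J>" unfolding \<J>_def by simp
  then have "\<exists>J\<in>\<J>. c - inverse (real (Suc n)) < ?m J" for n
    unfolding c_def by (subst less_cSUP_iff[OF _ bdd, symmetric]) auto
  then obtain Js where Js: "\<And>n. Js n \<in> \<J>" "\<And>n. c - inverse (real (Suc n)) < ?m (Js n)"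
    by metis
  define J where "J = (\<Union>n. Js n)"
  have J: "countable J" "J \<subseteq> I" using Js(1) unfolding J_def \<J>_def by auto
  have "(\<Union>j\<in>J. A j) \<in> sets M"
    using J assms by (intro sets.countable_UN') auto
  then have "?m (Js n) \<le> ?m J" for n
    unfolding J_def by (intro finite_measure_mono) auto
  have "c \<le> ?m J"
  proof (rule ccontr)
    assume "\<not> c \<le> ?m J"
    then obtain n where "inverse (real (Suc n)) < c - ?m J"
      using reals_Archimedean[of "c - ?m J"] by auto
    with Js(2)[of n] \<open>?m (Js n) \<le> ?m J\<close> show False by linarith
  qed
  show ?thesis
  proof (rule that[OF J])
    fix J' assume "countable J'" "J' \<subseteq> I"
    then have "?m J' \<le> c" unfolding c_def \<J>_def by (intro cSUP_upper[OF _ bdd[unfolded \<J>_def]]) auto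
    with \<open>c \<le> ?m J\<close> show "?m J' \<le> ?m J" by linarith
  qed
qed

lemma (in finite_measure) exhausting_sequence:
  assumes "I \<noteq> {}" "A ` I \<subseteq> sets M"
  obtains xs :: "nat \<Rightarrow> 'i" where "range xs \<subseteq> I" "\<And>i. i \<in> I \<Longrightarrow> A i - (\<Union>n. A (xs n)) \<in> null_sets M"
proof -
  let ?m = "\<lambda>J. measure M (\<Union>j\<in>J. A j)"
  obtain J0 where J0: "countable J0" "J0 \<subseteq> I"
    and max: "\<And>J'. countable J' \<Longrightarrow> J' \<subseteq> I \<Longrightarrow> ?m J' \<le> ?m J0"
    using countable_UN_max_measure[OF assms(2)] by blast
  obtain i0 where "i0 \<in> I" using assms(1) by blast
  define J where "J = insert i0 J0"
  have J: "countable J" "J \<subseteq> I" "J \<noteq> {}" using J0 \<open>i0 \<in> I\<close> unfolding J_def by auto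
  have UN_sets: "(\<Union>j\<in>J. A j) \<in> sets M"
    using J assms(2) by (intro sets.countable_UN') auto
  have null: "A i - (\<Union>j\<in>J. A j) \<in> null_sets M" if "i \<in> I" for i
  proof -
    have A_i: "A i \<in> sets M" using assms(2) that by auto
    have "?m (insert i J) \<le> ?m J0" by (rule max) (use J that in auto)
    also have "?m J0 \<le> ?m J" using UN_sets unfolding J_def by (intro finite_measure_mono) auto
    finally have "?m (insert i J) \<le> ?m J" .
    moreover have "?m (insert i J) = ?m J + measure M (A i - (\<Union>j\<in>J. A j))"
    proof -
      have "(\<Union>j\<in>insert i J. A j) = (\<Union>j\<in>J. A j) \<union> (A i - (\<Union>j\<in>J. A j))" by auto
      then show ?thesis using UN_sets A_i by (simp only:) (intro finite_measure_Union; auto)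
    qed
    ultimately have "measure M (A i - (\<Union>j\<in>J. A j)) = 0"
      using measure_nonneg[of M "A i - (\<Union>j\<in>J. A j)"] by linarith
    then show ?thesis
      using UN_sets A_i by (auto simp: emeasure_eq_measure)
  qed
  show ?thesis
  proof (rule that)
    show "range (from_nat_into J) \<subseteq> I"
      using J by (auto intro: range_from_nat_into_subset)
    have "(\<Union>n. A (from_nat_into J n)) = (\<Union>j\<in>J. A j)"
      using J by (intro UN_from_nat_into[symmetric])
    with null show "A i - (\<Union>n. A (from_nat_into J n)) \<in> null_sets M" if "i \<in> I" for i
      using that by simp
  qed
qed

section \<open>Nets indexed by directed sets\<close>

lemma eventually_directed_filter:
  assumes "directed_in L le I"
    and trans: "\<And>x y z. x \<in> I \<Longrightarrow> y \<in> I \<Longrightarrow> z \<in> I \<Longrightarrow> le x y \<Longrightarrow> le y z \<Longrightarrow> le x z"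
  shows "eventually P (directed_filter le I) \<longleftrightarrow> (\<exists>x\<in>I. \<forall>y\<in>I. le x y \<longrightarrow> P y)"
proof -
  have ne: "I \<noteq> {}" and dir: "\<And>x y. x \<in> I \<Longrightarrow> y \<in> I \<Longrightarrow> \<exists>z\<in>I. le x z \<and> le y z"
    using assms(1) unfolding directed_in_def by auto
  have "eventually P (INF x\<in>I. principal {y\<in>I. le x y}) \<longleftrightarrow> (\<exists>x\<in>I. eventually P (principal {y\<in>I. le x y}))"
  proof (rule eventually_INF_base[OF ne])
    fix a b assume ab: "a \<in> I" "b \<in> I"
    then obtain z where z: "z \<in> I" "le a z" "le b z" using dir by blast
    then have "{y\<in>I. le z y} \<subseteq> {y\<in>I. le a y} \<inter> {y\<in>I. le b y}"
      using ab trans by blast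
    then show "\<exists>x\<in>I. principal {y\<in>I. le x y} \<le> inf (principal {y\<in>I. le a y}) (principal {y\<in>I. le b y})"
      using z(1) by (intro bexI[of _ z]) (simp_all only: inf_principal principal_le_iff)
  qed
  then show ?thesis unfolding directed_filter_def eventually_principal by auto
qed

lemma filterlim_directed_filter_incseq:
  assumes dir: "directed_in L le (range f)"
    and trans: "\<And>x y z. x \<in> range f \<Longrightarrow> y \<in> range f \<Longrightarrow> z \<in> range f \<Longrightarrow> le x y \<Longrightarrow> le y z \<Longrightarrow> le x z"
    and mono: "\<And>m n. m \<le> n \<Longrightarrow> le (f m) (f n)"
  shows "filterlim f (directed_filter le (range f)) sequentially"
  unfolding filterlim_iff
proof (intro allI impI)
  fix P assume "eventually P (directed_filter le (range f))"
  then have "\<exists>x\<in>range f. \<forall>y\<in>range f. le x y \<longrightarrow> P y"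
    by (simp only: eventually_directed_filter[OF dir trans])
  then obtain m where "\<forall>y\<in>range f. le (f m) y \<longrightarrow> P y" by blast
  then show "eventually (\<lambda>n. P (f n)) sequentially"
    using mono unfolding eventually_sequentially by blast
qed

section \<open>The quotient algebra M/N\<close>

definition rep :: "'a set set \<Rightarrow> 'a set" where
  "rep A = (SOME a. a \<in> A)"

locale enhanced_space =
  fixes X :: "'a set" and M N :: "'a set set"
  assumes enhanced: "enhanced_measurable_space X M N"
begin

sublocale sigma_algebra X M
  using enhanced unfolding enhanced_measurable_space_def by blast

lemma null_sets_M: "A \<in> N \<Longrightarrow> A \<in> M"
  using enhanced unfolding enhanced_measurable_space_def by blast

lemma null_subset: "A \<in> N \<Longrightarrow> B \<subseteq> A \<Longrightarrow> B \<in> N"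
  using enhanced unfolding enhanced_measurable_space_def by blast

lemma null_countable_Union: "countable C \<Longrightarrow> C \<subseteq> N \<Longrightarrow> \<Union>C \<in> N"
  using enhanced unfolding enhanced_measurable_space_def by blast

lemma null_empty: "{} \<in> N"
  using null_countable_Union[of "{}"] by simp

lemma null_Un: "A \<in> N \<Longrightarrow> B \<in> N \<Longrightarrow> A \<union> B \<in> N"
  using null_countable_Union[of "{A, B}"] by simp

lemma null_UN: "(\<And>n::nat. A n \<in> N) \<Longrightarrow> (\<Union>n. A n) \<in> N"
  using null_countable_Union[of "range A"] by auto

lemma null_finite_UN: "finite I \<Longrightarrow> (\<And>i. i \<in> I \<Longrightarrow> A i \<in> N) \<Longrightarrow> (\<Union>i\<in>I. A i) \<in> N"
  using null_countable_Union[of "A ` I"] by (auto intro: countable_finite)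

lemma null_Diff_subset: "a \<subseteq> b \<Longrightarrow> a - b \<in> N"
  using null_empty by (simp add: Diff_eq_empty_iff[THEN iffD2])

abbreviation "Q \<equiv> quot M N"
abbreviation "cl \<equiv> qcls M N"
abbreviation "le \<equiv> qle N"

lemma qcls_self: "a \<in> M \<Longrightarrow> a \<in> cl a"
  unfolding qcls_def using null_empty by auto

lemma qcls_eq_iff:
  assumes "a \<in> M" "b \<in> M"
  shows "cl a = cl b \<longleftrightarrow> (a - b) \<union> (b - a) \<in> N"
proof
  assume "cl a = cl b"
  then have "a \<in> cl b" using qcls_self[OF assms(1)] by simp
  then show "(a - b) \<union> (b - a) \<in> N" unfolding qcls_def by (auto simp: Un_commute)
next
  have sub: "cl x \<subseteq> cl y" if "x \<in> M" "y \<in> M" "(x - y) \<union> (y - x) \<in> N" for x y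
  proof
    fix z assume "z \<in> cl x"
    then have z: "z \<in> M" "(x - z) \<union> (z - x) \<in> N" unfolding qcls_def by auto
    have "(y - z) \<union> (z - y) \<subseteq> ((x - z) \<union> (z - x)) \<union> ((x - y) \<union> (y - x))" by auto
    then have "(y - z) \<union> (z - y) \<in> N" using null_Un[OF z(2) that(3)] null_subset by blast
    then show "z \<in> cl y" using z unfolding qcls_def by auto
  qed
  assume "(a - b) \<union> (b - a) \<in> N"
  then show "cl a = cl b" using sub[OF assms] sub[OF assms(2,1)] by (auto simp: Un_commute)
qed

lemma qcls_null: "A \<in> N \<Longrightarrow> cl A = cl {}"
  using qcls_eq_iff[OF null_sets_M] by simp

lemma qcls_eq_empty_iff: "A \<in> M \<Longrightarrow> cl A = cl {} \<longleftrightarrow> A \<in> N"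
  using qcls_eq_iff[of A "{}"] by simp

lemma qcls_in_quot: "a \<in> M \<Longrightarrow> cl a \<in> Q"
  unfolding quot_def by auto

lemma rep_in_quot:
  assumes "A \<in> Q"
  shows "rep A \<in> M" "cl (rep A) = A"
proof -
  obtain a where a: "a \<in> M" "A = cl a" using assms unfolding quot_def by auto
  then have "rep A \<in> A" unfolding rep_def using qcls_self by (metis someI_ex)
  then have r: "rep A \<in> M" "(a - rep A) \<union> (rep A - a) \<in> N" using a unfolding qcls_def by auto
  show "rep A \<in> M" by (fact r(1))
  show "cl (rep A) = A" using qcls_eq_iff[OF r(1) a(1)] r a by (auto simp: Un_commute)
qed

lemma qle_qcls_iff:
  assumes "a \<in> M" "b \<in> M"
  shows "le (cl a) (cl b) \<longleftrightarrow> a - b \<in> N"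
proof
  assume "le (cl a) (cl b)"
  then obtain a' b' where ab: "a' \<in> cl a" "b' \<in> cl b" "a' - b' \<in> N" unfolding qle_def by blast
  then have "(a - a') \<union> (a' - a) \<in> N" "(b - b') \<union> (b' - b) \<in> N" unfolding qcls_def by auto
  moreover have "a - b \<subseteq> ((a - a') \<union> (a' - a)) \<union> (a' - b') \<union> ((b - b') \<union> (b' - b))" by auto
  ultimately show "a - b \<in> N" using ab(3) null_Un null_subset by metis
next
  assume "a - b \<in> N"
  then show "le (cl a) (cl b)" unfolding qle_def using qcls_self assms by blast
qed

lemma qle_subset: "a \<in> M \<Longrightarrow> b \<in> M \<Longrightarrow> a \<subseteq> b \<Longrightarrow> le (cl a) (cl b)"
  by (simp add: qle_qcls_iff null_Diff_subset)

lemma qle_rep_iff: "x \<in> Q \<Longrightarrow> y \<in> Q \<Longrightarrow> le x y \<longleftrightarrow> rep x - rep y \<in> N"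
  using qle_qcls_iff[OF rep_in_quot(1) rep_in_quot(1), of x y] by (simp add: rep_in_quot(2))

lemma qle_refl: "x \<in> Q \<Longrightarrow> le x x"
  using qle_rep_iff null_empty by auto

lemma qle_trans:
  assumes "x \<in> Q" "y \<in> Q" "z \<in> Q" "le x y" "le y z"
  shows "le x z"
proof -
  have "rep x - rep z \<subseteq> (rep x - rep y) \<union> (rep y - rep z)" by auto
  then show ?thesis using assms qle_rep_iff null_Un null_subset by metis
qed

lemma qle_antisym:
  assumes "x \<in> Q" "y \<in> Q" "le x y" "le y x"
  shows "x = y"
proof -
  have "cl (rep x) = cl (rep y)" using assms qle_rep_iff qcls_eq_iff rep_in_quot(1) null_Un by metis
  then show ?thesis using rep_in_quot(2) assms by metis
qed

lemma eventually_directed_filter_quot: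
  assumes "directed_in Q le I"
  shows "eventually P (directed_filter le I) \<longleftrightarrow> (\<exists>x\<in>I. \<forall>y\<in>I. le x y \<longrightarrow> P y)"
proof (rule eventually_directed_filter[OF assms])
  have "I \<subseteq> Q" using assms unfolding directed_in_def by blast
  then show "le x z" if "x \<in> I" "y \<in> I" "z \<in> I" "le x y" "le y z" for x y z
    using that by (intro qle_trans[of x y z]) auto
qed

lemma directed_in_finite_ub:
  assumes dir: "directed_in Q le I" and "finite F" "F \<subseteq> I"
  shows "\<exists>z\<in>I. \<forall>x\<in>F. le x z"
  using \<open>finite F\<close> \<open>F \<subseteq> I\<close>
proof (induction F rule: finite_induct)
  case empty
  then show ?case using dir unfolding directed_in_def by blast
next
  case (insert a F)
  then obtain z where z: "z \<in> I" "\<forall>x\<in>F. le x z" by blast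
  obtain w where w: "w \<in> I" "le a w" "le z w"
    using dir insert.prems z(1) unfolding directed_in_def by blast
  have "I \<subseteq> Q" using dir unfolding directed_in_def by blast
  then have "le x w" if "x \<in> F" for x
    using z w that insert.prems by (intro qle_trans[of x z w]) auto
  then show ?case using w by blast
qed

lemma lsup_eqI:
  assumes "L \<subseteq> Q" "is_lub L le S s"
  shows "lsup L le S = s"
  unfolding lsup_def
proof (rule the_equality)
  fix t assume "is_lub L le S t"
  with assms(2) have "t \<in> L" "s \<in> L" "le t s" "le s t" unfolding is_lub_def by auto
  with assms(1) show "t = s" using qle_antisym by blast
qed (fact assms(2))

lemma linf_eqI:
  assumes "L \<subseteq> Q" "is_glb L le S s"
  shows "linf L le S = s"
  unfolding linf_def
proof (rule the_equality)
  fix t assume "is_glb L le S t"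
  with assms(2) have "t \<in> L" "s \<in> L" "le t s" "le s t" unfolding is_glb_def by auto
  with assms(1) show "t = s" using qle_antisym by blast
qed (fact assms(2))

definition downset :: "'a set \<Rightarrow> 'a set set set" where
  "downset r = {b \<in> Q. le b (cl r)}"

lemma downset_subset: "downset r \<subseteq> Q"
  unfolding downset_def by auto

lemma downset_space: "downset X = Q"
proof -
  have "le b (cl X)" if "b \<in> Q" for b
    using qle_subset[OF rep_in_quot(1)[OF that] top] rep_in_quot(2)[OF that] sets_into_space[OF rep_in_quot(1)[OF that]]
    by simp
  then show ?thesis unfolding downset_def by auto
qed

lemma downset_rep: "a \<in> Q \<Longrightarrow> downset (rep a) = {b \<in> Q. le b a}"
  unfolding downset_def by (simp add: rep_in_quot(2))

lemma qcls_in_downset: "a \<in> M \<Longrightarrow> r \<in> M \<Longrightarrow> a \<subseteq> r \<Longrightarrow> cl a \<in> downset r"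
  unfolding downset_def by (simp add: qcls_in_quot qle_subset)

lemma le_downset_rep:
  assumes "u \<in> downset r" "a \<in> M"
  shows "le (cl a) u \<longleftrightarrow> a - rep u \<in> N" "le u (cl a) \<longleftrightarrow> rep u - a \<in> N"
  using assms downset_subset qle_qcls_iff[OF assms(2) rep_in_quot(1)] qle_qcls_iff[OF rep_in_quot(1) assms(2)]
  by (auto simp: rep_in_quot(2))

lemma lsup_pair:
  assumes "r \<in> M" "a \<in> M" "b \<in> M" "a \<subseteq> r" "b \<subseteq> r"
  shows "lsup (downset r) le {cl a, cl b} = cl (a \<union> b)"
proof (rule lsup_eqI[OF downset_subset], unfold is_lub_def, intro conjI ballI impI)
  show "cl (a \<union> b) \<in> downset r" using assms by (intro qcls_in_downset) auto
  show "le x (cl (a \<union> b))" if "x \<in> {cl a, cl b}" for x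
    using that assms by (auto intro: qle_subset)
  fix u assume u: "u \<in> downset r" "\<forall>x\<in>{cl a, cl b}. le x u"
  then have "a - rep u \<in> N" "b - rep u \<in> N" using le_downset_rep assms by auto
  then have "(a \<union> b) - rep u \<in> N" using null_Un by (simp add: Un_Diff)
  then show "le (cl (a \<union> b)) u" using le_downset_rep[OF u(1)] assms by auto
qed

lemma linf_pair:
  assumes "r \<in> M" "a \<in> M" "b \<in> M" "a \<subseteq> r" "b \<subseteq> r"
  shows "linf (downset r) le {cl a, cl b} = cl (a \<inter> b)"
proof (rule linf_eqI[OF downset_subset], unfold is_glb_def, intro conjI ballI impI)
  show "cl (a \<inter> b) \<in> downset r" using assms by (intro qcls_in_downset) auto
  show "le (cl (a \<inter> b)) x" if "x \<in> {cl a, cl b}" for x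
    using that assms by (auto intro: qle_subset)
  fix u assume u: "u \<in> downset r" "\<forall>x\<in>{cl a, cl b}. le u x"
  then have "rep u - a \<in> N" "rep u - b \<in> N" using le_downset_rep assms by auto
  then have "rep u - (a \<inter> b) \<in> N" using null_Un by (simp add: Diff_Int)
  then show "le u (cl (a \<inter> b))" using le_downset_rep[OF u(1)] assms by auto
qed

lemma lbot_downset:
  assumes "r \<in> M"
  shows "lbot (downset r) le = cl {}"
  unfolding lbot_def
proof (rule lsup_eqI[OF downset_subset], unfold is_lub_def, intro conjI ballI impI)
  show "cl {} \<in> downset r" using assms by (intro qcls_in_downset) auto
  show "le (cl {}) u" if "u \<in> downset r" for u
    using le_downset_rep[OF that] null_empty by simp
qed simp

lemma lsup_range:
  fixes B :: "nat \<Rightarrow> 'a set"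
  assumes "r \<in> M" "\<And>n. B n \<in> M" "\<And>n. B n \<subseteq> r"
  shows "lsup (downset r) le (range (\<lambda>n. cl (B n))) = cl (\<Union>n. B n)"
proof -
  have UN_M: "(\<Union>n. B n) \<in> M" using assms(2) by auto
  show ?thesis
  proof (rule lsup_eqI[OF downset_subset], unfold is_lub_def, intro conjI ballI impI)
    show "cl (\<Union>n. B n) \<in> downset r" using assms UN_M by (intro qcls_in_downset) auto
    show "le x (cl (\<Union>n. B n))" if "x \<in> range (\<lambda>n. cl (B n))" for x
      using that assms UN_M by (auto intro: qle_subset)
    fix u assume u: "u \<in> downset r" "\<forall>x\<in>range (\<lambda>n. cl (B n)). le x u"
    then have "B n - rep u \<in> N" for n using le_downset_rep assms by auto
    then have "(\<Union>n. B n - rep u) \<in> N" by (rule null_UN)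
    moreover have "(\<Union>n. B n - rep u) = (\<Union>n. B n) - rep u" by blast
    ultimately show "le (cl (\<Union>n. B n)) u" using le_downset_rep[OF u(1) UN_M] by simp
  qed
qed

section \<open>Continuous valuations induce essential measures\<close>

lemma valuation_empty:
  assumes "r \<in> M" "valuation_on (downset r) le \<nu>"
  shows "\<nu> (cl {}) = 0"
  using assms lbot_downset unfolding valuation_on_def by simp

lemma continuous_valuation_empty:
  "r \<in> M \<Longrightarrow> continuous_valuation_on (downset r) le \<nu> \<Longrightarrow> \<nu> (cl {}) = 0"
  unfolding continuous_valuation_on_def using valuation_empty by blast

lemma valuation_disjoint_Un:
  assumes r: "r \<in> M" and \<nu>: "valuation_on (downset r) le \<nu>"
    and ab: "a \<in> M" "b \<in> M" "a \<subseteq> r" "b \<subseteq> r" "a \<inter> b = {}"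
  shows "\<nu> (cl (a \<union> b)) = \<nu> (cl a) + \<nu> (cl b)"
proof -
  have "cl a \<in> downset r" "cl b \<in> downset r" using ab r by (auto intro: qcls_in_downset)
  then have "\<nu> (cl a) + \<nu> (cl b) = \<nu> (lsup (downset r) le {cl a, cl b}) + \<nu> (linf (downset r) le {cl a, cl b})"
    using \<nu> unfolding valuation_on_def by blast
  then show ?thesis
    using lsup_pair[OF r ab(1-4)] linf_pair[OF r ab(1-4)] ab(5) valuation_empty[OF r \<nu>] by simp
qed

lemma continuous_valuation_incseq:
  fixes B :: "nat \<Rightarrow> 'a set"
  assumes r: "r \<in> M" and \<nu>: "continuous_valuation_on (downset r) le \<nu>"
    and B: "\<And>n. B n \<in> M" "\<And>n. B n \<subseteq> r" "incseq B"
  shows "(\<lambda>n. \<nu> (cl (B n))) \<longlonglongrightarrow> \<nu> (cl (\<Union>n. B n))"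
proof -
  have mono: "le (cl (B m)) (cl (B n))" if "m \<le> n" for m n
    using B that by (intro qle_subset) (auto simp: incseq_def)
  have sub: "range (\<lambda>n. cl (B n)) \<subseteq> downset r"
    using B r by (auto intro: qcls_in_downset)
  have dir: "directed_in (downset r) le (range (\<lambda>n. cl (B n)))"
    unfolding directed_in_def
  proof (intro conjI ballI)
    fix x y assume "x \<in> range (\<lambda>n. cl (B n))" "y \<in> range (\<lambda>n. cl (B n))"
    then obtain m n where "x = cl (B m)" "y = cl (B n)" by auto
    then show "\<exists>z\<in>range (\<lambda>n. cl (B n)). le x z \<and> le y z"
      using mono[of m "max m n"] mono[of n "max m n"] by auto
  qed (use sub in auto)
  have trans: "le x z" if "x \<in> range (\<lambda>n. cl (B n))" "y \<in> range (\<lambda>n. cl (B n))"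
      "z \<in> range (\<lambda>n. cl (B n))" "le x y" "le y z" for x y z
    using that sub downset_subset by (intro qle_trans[of x y z]) auto
  have "(\<nu> \<longlongrightarrow> \<nu> (lsup (downset r) le (range (\<lambda>n. cl (B n)))))
      (directed_filter le (range (\<lambda>n. cl (B n))))"
    using \<nu> dir unfolding continuous_valuation_on_def by blast
  then have "(\<nu> \<longlongrightarrow> \<nu> (cl (\<Union>n. B n))) (directed_filter le (range (\<lambda>n. cl (B n))))"
    by (simp only: lsup_range[OF r B(1,2)])
  then show ?thesis
    by (rule filterlim_compose[OF _ filterlim_directed_filter_incseq[OF dir trans mono]])
qed

lemma continuous_valuation_sigma_additive:
  fixes \<nu> :: "'a set set \<Rightarrow> 'c::real_normed_vector"
  assumes r: "r \<in> M" and \<nu>: "continuous_valuation_on (downset r) le \<nu>"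
  shows "sigma_additive M (\<lambda>E. \<nu> (cl (E \<inter> r)))"
  unfolding sigma_additive_def
proof (intro allI impI)
  fix A :: "nat \<Rightarrow> 'a set" assume A: "range A \<subseteq> M" "disjoint_family A"
  have val: "valuation_on (downset r) le \<nu>" using \<nu> unfolding continuous_valuation_on_def by blast
  define B where "B n = (\<Union>k<n. A k \<inter> r)" for n
  have AM: "A k \<in> M" for k using A(1) by auto
  then have B: "B n \<in> M" "B n \<subseteq> r" for n using r unfolding B_def by (auto intro!: finite_UN Int)
  have partial: "(\<Sum>k<n. \<nu> (cl (A k \<inter> r))) = \<nu> (cl (B n))" for n
  proof (induction n)
    case 0
    show ?case using valuation_empty[OF r val] by (simp add: B_def)
  next
    case (Suc n)
    have "B (Suc n) = B n \<union> (A n \<inter> r)" unfolding B_def by (auto simp: lessThan_Suc)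
    moreover have "B n \<inter> (A n \<inter> r) = {}"
      using A(2) unfolding B_def disjoint_family_on_def by (fastforce dest: less_imp_neq)
    ultimately have "\<nu> (cl (B (Suc n))) = \<nu> (cl (B n)) + \<nu> (cl (A n \<inter> r))"
      using valuation_disjoint_Un[OF r val B(1)[of n] Int[OF AM[of n] r] B(2)[of n]] by auto
    with Suc show ?case by simp
  qed
  have "incseq B" unfolding B_def incseq_def by (auto intro: order_less_le_trans)
  moreover have "(\<Union>n. B n) = \<Union>(range A) \<inter> r" unfolding B_def by auto
  ultimately have "(\<lambda>n. \<nu> (cl (B n))) \<longlonglongrightarrow> \<nu> (cl (\<Union>(range A) \<inter> r))"
    using continuous_valuation_incseq[OF r \<nu>, of B] B by simp
  then show "(\<lambda>n. \<nu> (cl (A n \<inter> r))) sums \<nu> (cl (\<Union>(range A) \<inter> r))"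
    unfolding sums_def partial .
qed

lemma continuous_valuation_finite_measure:
  assumes "continuous_valuation_on Q le \<nu>"
  shows "finite_measure_on M N (\<lambda>m\<in>M. \<nu> (cl m))"
  unfolding finite_measure_on_iff
proof
  have "continuous_valuation_on (downset X) le \<nu>" using assms by (simp add: downset_space)
  from continuous_valuation_sigma_additive[OF top this]
  show "sigma_additive M (\<lambda>m\<in>M. \<nu> (cl m))"
    by (rule sigma_additive_cong[OF sigma_algebra_axioms, rotated]) (simp add: Int_absorb2 sets_into_space)
  have "\<nu> (cl {}) = 0"
    using continuous_valuation_empty[OF top] assms by (simp add: downset_space)
  then show "\<forall>A\<in>N. (\<lambda>m\<in>M. \<nu> (cl m)) A = 0"
    using null_sets_M qcls_null by simp
qed

lemma faithful_valuation_measure: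
  assumes "a \<in> Q" "has_faithful_valuation_below M N a"
  shows "\<exists>\<rho> :: 'a set \<Rightarrow> real. sigma_additive M \<rho> \<and> (\<forall>E\<in>M. 0 \<le> \<rho> E) \<and> (\<forall>E\<in>N. \<rho> E = 0) \<and>
    (\<forall>E\<in>M. \<rho> E = 0 \<longrightarrow> E \<inter> rep a \<in> N)"
proof -
  obtain v :: "'a set set \<Rightarrow> real" where v: "continuous_valuation_on (downset (rep a)) le v"
    "\<forall>b\<in>downset (rep a). 0 \<le> v b" "\<forall>b\<in>downset (rep a). v b = 0 \<longrightarrow> b = cl {}"
    using assms(2) unfolding has_faithful_valuation_below_def Let_def downset_rep[OF assms(1)] by blast
  have r: "rep a \<in> M" using rep_in_quot(1)[OF assms(1)] .
  have in_downset: "cl (E \<inter> rep a) \<in> downset (rep a)" if "E \<in> M" for E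
    using that r by (intro qcls_in_downset) auto
  show ?thesis
  proof (intro exI[of _ "\<lambda>E. v (cl (E \<inter> rep a))"] conjI ballI impI)
    show "sigma_additive M (\<lambda>E. v (cl (E \<inter> rep a)))"
      by (rule continuous_valuation_sigma_additive[OF r v(1)])
    show "0 \<le> v (cl (E \<inter> rep a))" if "E \<in> M" for E
      using v(2) in_downset[OF that] by blast
    show "v (cl (E \<inter> rep a)) = 0" if "E \<in> N" for E
      using continuous_valuation_empty[OF r v(1)] qcls_null[OF null_subset[OF that Int_lower1]] by simp
    show "E \<inter> rep a \<in> N" if "E \<in> M" "v (cl (E \<inter> rep a)) = 0" for E
      using v(3) in_downset[OF that(1)] that(2) qcls_eq_empty_iff[OF Int[OF that(1) r]] by blast
  qed
qed

lemma sigma_finite_set_faithful_cover: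
  assumes F: "finite F" "F \<subseteq> Q" "\<And>a. a \<in> F \<Longrightarrow> has_faithful_valuation_below M N a"
    and m: "m \<in> M" "m \<subseteq> \<Union>(rep ` F)"
  shows "sigma_finite_set M N m"
proof -
  have "\<forall>a\<in>F. \<exists>\<rho> :: 'a set \<Rightarrow> real. sigma_additive M \<rho> \<and> (\<forall>E\<in>M. 0 \<le> \<rho> E) \<and>
      (\<forall>E\<in>N. \<rho> E = 0) \<and> (\<forall>E\<in>M. \<rho> E = 0 \<longrightarrow> E \<inter> rep a \<in> N)"
    using faithful_valuation_measure F(2,3) by blast
  then obtain \<rho> :: "'a set set \<Rightarrow> 'a set \<Rightarrow> real" where \<rho>: "\<forall>a\<in>F. sigma_additive M (\<rho> a) \<and>
      (\<forall>E\<in>M. 0 \<le> \<rho> a E) \<and> (\<forall>E\<in>N. \<rho> a E = 0) \<and> (\<forall>E\<in>M. \<rho> a E = 0 \<longrightarrow> E \<inter> rep a \<in> N)"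
    by (rule bchoice[THEN exE])
  define \<nu> where "\<nu> E = complex_of_real (\<Sum>a\<in>F. \<rho> a E)" for E
  have "sigma_additive M \<nu>"
    unfolding sigma_additive_def
  proof (intro allI impI)
    fix A :: "nat \<Rightarrow> 'a set" assume "range A \<subseteq> M" "disjoint_family A"
    then have "(\<lambda>n. \<rho> a (A n)) sums \<rho> a (\<Union>(range A))" if "a \<in> F" for a
      using \<rho> that unfolding sigma_additive_def by blast
    then show "(\<lambda>n. \<nu> (A n)) sums \<nu> (\<Union>(range A))"
      unfolding \<nu>_def by (intro sums_of_real sums_sum)
  qed
  moreover have "\<nu> E = 0" if "E \<in> N" for E
    using \<rho> that unfolding \<nu>_def by simp
  ultimately have "finite_measure_on {s \<in> M. s \<subseteq> m} {s \<in> N. s \<subseteq> m} \<nu>"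
    unfolding finite_measure_on_iff by (auto intro: sigma_additive_subset[of _ M])
  moreover have "E \<in> N" if E: "E \<in> M" "E \<subseteq> m" "restr_zero M \<nu> E" for E
  proof -
    have "\<nu> E = 0" using E unfolding restr_zero_def by blast
    then have "(\<Sum>a\<in>F. \<rho> a E) = 0" unfolding \<nu>_def of_real_eq_0_iff .
    then have "\<forall>a\<in>F. \<rho> a E = 0" using \<rho> E(1) by (simp add: sum_nonneg_eq_0_iff[OF F(1)])
    then have "E \<inter> rep a \<in> N" if "a \<in> F" for a using \<rho> E(1) that by blast
    then have "(\<Union>a\<in>F. E \<inter> rep a) \<in> N" by (rule null_finite_UN[OF F(1)])
    moreover have "(\<Union>a\<in>F. E \<inter> rep a) = E" using E(2) m(2) by blast
    ultimately show ?thesis by simp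
  qed
  ultimately show ?thesis unfolding sigma_finite_set_def by blast
qed

lemma lub_null_residue:
  assumes lub: "is_lub Q le I (cl s)" and I: "I \<subseteq> Q" and s: "s \<in> M"
    and d: "d \<in> M" "d \<subseteq> s" and null: "\<And>x. x \<in> I \<Longrightarrow> d \<inter> rep x \<in> N"
  shows "d \<in> N"
proof -
  have c: "X - d \<in> M" using d(1) by auto
  have "le x (cl (X - d))" if "x \<in> I" for x
  proof -
    have xQ: "x \<in> Q" using that I by blast
    have "rep x - (X - d) = d \<inter> rep x" using sets_into_space[OF rep_in_quot(1)[OF xQ]] by blast
    then have "rep x - (X - d) \<in> N" using null[OF that] by simp
    then show ?thesis using qle_qcls_iff[OF rep_in_quot(1)[OF xQ] c] rep_in_quot(2)[OF xQ] by simp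
  qed
  then have "le (cl s) (cl (X - d))" using lub qcls_in_quot[OF c] unfolding is_lub_def by blast
  then have "s - (X - d) \<in> N" using qle_qcls_iff[OF s c] by simp
  moreover have "s - (X - d) = d" using d(2) sets_into_space[OF s] by blast
  ultimately show ?thesis by simp
qed

definition trace_joins :: "'a set \<Rightarrow> 'a set set set \<Rightarrow> 'a set set set" where
  "trace_joins s F = {cl (s \<inter> \<Union>(rep ` G)) | G. finite G \<and> G \<subseteq> F}"

lemma trace_join_M: "s \<in> M \<Longrightarrow> finite G \<Longrightarrow> G \<subseteq> Q \<Longrightarrow> s \<inter> \<Union>(rep ` G) \<in> M"
  using rep_in_quot(1) by (intro Int finite_UN) auto

lemma trace_joins_directed:
  assumes "F \<subseteq> Q" "s \<in> M"
  shows "directed_in Q le (trace_joins s F)"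
  unfolding directed_in_def
proof (intro conjI ballI)
  show "trace_joins s F \<subseteq> Q"
    using assms trace_join_M unfolding trace_joins_def by (auto intro: qcls_in_quot)
  show "trace_joins s F \<noteq> {}"
    unfolding trace_joins_def by blast
  fix x y assume "x \<in> trace_joins s F" "y \<in> trace_joins s F"
  then obtain G H where G: "finite G" "G \<subseteq> F" "x = cl (s \<inter> \<Union>(rep ` G))"
    and H: "finite H" "H \<subseteq> F" "y = cl (s \<inter> \<Union>(rep ` H))"
    unfolding trace_joins_def by blast
  have "cl (s \<inter> \<Union>(rep ` (G \<union> H))) \<in> trace_joins s F"
    using G H unfolding trace_joins_def by blast
  moreover have "le x (cl (s \<inter> \<Union>(rep ` (G \<union> H))))" "le y (cl (s \<inter> \<Union>(rep ` (G \<union> H))))"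
    unfolding G(3) H(3) using G(1,2) H(1,2) assms
    by (intro qle_subset trace_join_M; force)+
  ultimately show "\<exists>z\<in>trace_joins s F. le x z \<and> le y z" by blast
qed

lemma trace_joins_lub:
  assumes lub: "is_lub Q le F (cl X)" and F: "F \<subseteq> Q" and s: "s \<in> M"
  shows "is_lub Q le (trace_joins s F) (cl s)"
  unfolding is_lub_def
proof (intro conjI ballI impI)
  show "cl s \<in> Q" using s by (rule qcls_in_quot)
  show "le x (cl s)" if "x \<in> trace_joins s F" for x
  proof -
    from that obtain G where G: "finite G" "G \<subseteq> F" "x = cl (s \<inter> \<Union>(rep ` G))"
      unfolding trace_joins_def by auto
    show ?thesis
      unfolding G(3) by (rule qle_subset[OF trace_join_M[OF s G(1)] s]) (use G(2) F in auto)
  qed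
  fix u assume u: "u \<in> Q" "\<forall>x\<in>trace_joins s F. le x u"
  have u_M: "rep u \<in> M" and u_cl: "cl (rep u) = u" using rep_in_quot[OF u(1)] by auto
  have "(s - rep u) \<inter> rep a \<in> N" if a: "a \<in> F" for a
  proof -
    have aQ: "a \<in> Q" using a F by blast
    have "cl (s \<inter> \<Union>(rep ` {a})) \<in> trace_joins s F"
      unfolding trace_joins_def using a by (intro CollectI exI[of _ "{a}"]) simp
    then have "le (cl (s \<inter> rep a)) (cl (rep u))" using u(2) unfolding u_cl by simp
    then have "(s \<inter> rep a) - rep u \<in> N"
      using qle_qcls_iff[OF Int[OF s rep_in_quot(1)[OF aQ]] u_M] by simp
    moreover have "(s \<inter> rep a) - rep u = (s - rep u) \<inter> rep a" by blast
    ultimately show ?thesis by simp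
  qed
  then have "s - rep u \<in> N"
    using lub_null_residue[OF lub F top] s u_M sets_into_space[OF s] by blast
  then show "le (cl s) u"
    using qle_qcls_iff[OF s u_M] u_cl by simp
qed

lemma continuous_valuation_essential:
  assumes loc: "localizable X M N" and \<nu>: "continuous_valuation_on Q le \<nu>"
  shows "essential M N (\<lambda>m\<in>M. \<nu> (cl m))"
  unfolding essential_def
proof (intro ballI impI)
  fix m assume m: "m \<in> M" "\<not> restr_zero M (\<lambda>m\<in>M. \<nu> (cl m)) m"
  then obtain s where s: "s \<in> M" "s \<subseteq> m" "\<nu> (cl s) \<noteq> 0" unfolding restr_zero_def by auto
  define F where "F = {a \<in> Q. has_faithful_valuation_below M N a}"
  have F: "F \<subseteq> Q" "is_lub Q le F (cl X)"
    using loc unfolding localizable_def F_def by auto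
  let ?I = "trace_joins s F"
  have dir: "directed_in Q le ?I" by (rule trace_joins_directed[OF F(1) s(1)])
  have IQ: "?I \<subseteq> Q" using dir unfolding directed_in_def by blast
  have "(\<nu> \<longlongrightarrow> \<nu> (lsup Q le ?I)) (directed_filter le ?I)"
    using \<nu> dir unfolding continuous_valuation_on_def by blast
  then have "(\<nu> \<longlongrightarrow> \<nu> (cl s)) (directed_filter le ?I)"
    by (simp only: lsup_eqI[OF order_refl trace_joins_lub[OF F(2,1) s(1)]])
  then have "eventually (\<lambda>x. \<nu> x \<noteq> 0) (directed_filter le ?I)"
    using s(3) by (rule tendsto_imp_eventually_ne)
  then have "\<exists>x\<in>?I. \<forall>y\<in>?I. le x y \<longrightarrow> \<nu> y \<noteq> 0"
    unfolding eventually_directed_filter_quot[OF dir] .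
  then obtain x where "x \<in> ?I" "\<nu> x \<noteq> 0"
    using IQ qle_refl by blast
  then obtain G where G: "finite G" "G \<subseteq> F" "\<nu> (cl (s \<inter> \<Union>(rep ` G))) \<noteq> 0"
    unfolding trace_joins_def by auto
  define m' where "m' = s \<inter> \<Union>(rep ` G)"
  have GQ: "G \<subseteq> Q" using G(2) F(1) by blast
  have m': "m' \<in> M" unfolding m'_def using trace_join_M[OF s(1) G(1) GQ] .
  have "sigma_finite_set M N m'"
  proof (rule sigma_finite_set_faithful_cover[OF G(1) GQ _ m'])
    show "has_faithful_valuation_below M N a" if "a \<in> G" for a using that G(2) unfolding F_def by blast
    show "m' \<subseteq> \<Union>(rep ` G)" unfolding m'_def by blast
  qed
  moreover have "\<not> restr_zero M (\<lambda>m\<in>M. \<nu> (cl m)) m'"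
    using m' G(3) unfolding restr_zero_def m'_def by auto
  moreover have "m' \<subseteq> m" using s(2) unfolding m'_def by blast
  ultimately show "\<exists>m'\<in>M. m' \<subseteq> m \<and> sigma_finite_set M N m' \<and> \<not> restr_zero M (\<lambda>m\<in>M. \<nu> (cl m)) m'"
    using m' by blast
qed

section \<open>Essential measures induce continuous valuations\<close>

lemma sigma_finite_set_faithful_measure:
  assumes "sigma_finite_set M N m" "m \<in> M"
  obtains L where "finite_measure L" "sets L = {t \<in> M. t \<subseteq> m}" "\<And>E. E \<in> null_sets L \<Longrightarrow> E \<in> N"
proof -
  obtain \<rho> where \<rho>: "finite_measure_on {t \<in> M. t \<subseteq> m} {t \<in> N. t \<subseteq> m} \<rho>"
    and faithful: "\<And>E. E \<in> M \<Longrightarrow> E \<subseteq> m \<Longrightarrow> restr_zero M \<rho> E \<Longrightarrow> E \<in> N"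
    using assms(1) unfolding sigma_finite_set_def by blast
  have "{t \<in> M. t \<subseteq> m} = restricted_space m" using assms(2) by auto
  then have "sigma_algebra m {t \<in> M. t \<subseteq> m}"
    using restricted_sigma_algebra[OF assms(2)] by simp
  moreover have "sigma_additive {t \<in> M. t \<subseteq> m} \<rho>"
    using \<rho> unfolding finite_measure_on_iff by blast
  ultimately obtain L where L: "finite_measure L" "sets L = {t \<in> M. t \<subseteq> m}"
    "null_sets L = {E \<in> {t \<in> M. t \<subseteq> m}. restr_zero {t \<in> M. t \<subseteq> m} \<rho> E}"
    by (rule complex_sigma_additive_dominating_measure)
  show ?thesis
  proof (rule that[OF L(1,2)])
    fix E assume "E \<in> null_sets L"
    then have E: "E \<in> M" "E \<subseteq> m" "restr_zero {t \<in> M. t \<subseteq> m} \<rho> E" using L(3) by auto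
    then have "restr_zero M \<rho> E" unfolding restr_zero_def by auto
    with E(1,2) show "E \<in> N" by (rule faithful)
  qed
qed

definition measure_valuation :: "('a set \<Rightarrow> complex) \<Rightarrow> 'a set set \<Rightarrow> complex" where
  "measure_valuation \<mu> = (\<lambda>A\<in>Q. \<mu> (rep A))"

lemma measure_valuation_restrict:
  assumes "\<nu> \<in> Q \<rightarrow>\<^sub>E UNIV"
  shows "measure_valuation (\<lambda>m\<in>M. \<nu> (cl m)) = \<nu>"
proof
  fix A show "measure_valuation (\<lambda>m\<in>M. \<nu> (cl m)) A = \<nu> A"
    using assms rep_in_quot[of A] by (cases "A \<in> Q") (auto simp: measure_valuation_def PiE_def extensional_def)
qed

context
  fixes \<mu> :: "'a set \<Rightarrow> complex"
  assumes \<mu>: "finite_measure_on M N \<mu>"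
begin

lemma measure_null: "A \<in> N \<Longrightarrow> \<mu> A = 0"
  using \<mu> unfolding finite_measure_on_def by blast

lemma measure_Int_Diff: "A \<in> M \<Longrightarrow> B \<in> M \<Longrightarrow> \<mu> A = \<mu> (A \<inter> B) + \<mu> (A - B)"
  using sigma_additive_Int_Diff[OF sigma_algebra_axioms] \<mu> unfolding finite_measure_on_iff by blast

lemma measure_Diff_null:
  assumes "A \<in> M" "B \<in> M" "B - A \<in> N"
  shows "\<mu> A - \<mu> B = \<mu> (A - B)"
  using measure_Int_Diff[OF assms(1,2)] measure_Int_Diff[OF assms(2,1)] measure_null[OF assms(3)]
  by (simp add: Int_commute)

lemma measure_valuation_qcls:
  assumes "m \<in> M"
  shows "measure_valuation \<mu> (cl m) = \<mu> m"
proof -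
  have r: "rep (cl m) \<in> M" "cl (rep (cl m)) = cl m" using rep_in_quot[OF qcls_in_quot[OF assms]] by auto
  then have "(rep (cl m) - m) \<union> (m - rep (cl m)) \<in> N" using qcls_eq_iff[OF r(1) assms] by simp
  then have "rep (cl m) - m \<in> N" "m - rep (cl m) \<in> N" using null_subset by blast+
  then show ?thesis
    using measure_Diff_null[OF assms r(1)] measure_null qcls_in_quot[OF assms]
    by (simp add: measure_valuation_def)
qed

lemma measure_valuation_diff:
  assumes "x \<in> Q" "y \<in> Q" "le y x"
  shows "measure_valuation \<mu> x - measure_valuation \<mu> y = \<mu> (rep x - rep y)"
  using measure_Diff_null[OF rep_in_quot(1)[OF assms(1)] rep_in_quot(1)[OF assms(2)]]
    qle_rep_iff[OF assms(2,1)] assms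
  by (simp add: measure_valuation_def)

lemma measure_valuation_image:
  assumes "\<mu> \<in> M \<rightarrow>\<^sub>E UNIV"
  shows "(\<lambda>m\<in>M. measure_valuation \<mu> (cl m)) = \<mu>"
proof
  fix m show "(\<lambda>m\<in>M. measure_valuation \<mu> (cl m)) m = \<mu> m"
    using assms measure_valuation_qcls by (cases "m \<in> M") (auto simp: PiE_def extensional_def)
qed

lemma valuation_measure_valuation: "valuation_on Q le (measure_valuation \<mu>)"
  unfolding valuation_on_def
proof (intro conjI ballI)
  show "measure_valuation \<mu> (lbot Q le) = 0"
    using lbot_downset[OF top] measure_valuation_qcls[OF empty_sets] measure_null[OF null_empty]
    by (simp add: downset_space)
  fix x y assume xy: "x \<in> Q" "y \<in> Q"
  define a b where "a = rep x" and "b = rep y"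
  have ab: "a \<in> M" "b \<in> M" "cl a = x" "cl b = y" "a \<subseteq> X" "b \<subseteq> X"
    unfolding a_def b_def using rep_in_quot xy sets_into_space by auto
  have "\<mu> a + \<mu> b = \<mu> (a \<union> b) + \<mu> (a \<inter> b)"
    using measure_Int_Diff[of "a \<union> b" a] measure_Int_Diff[of b a] ab Un[OF ab(1,2)]
    by (simp add: Int_absorb1 Int_commute Un_Diff)
  moreover have "lsup Q le {x, y} = cl (a \<union> b)" "linf Q le {x, y} = cl (a \<inter> b)"
    using lsup_pair[OF top ab(1,2,5,6)] linf_pair[OF top ab(1,2,5,6)] ab(3,4) by (simp_all add: downset_space)
  ultimately show "measure_valuation \<mu> x + measure_valuation \<mu> y =
      measure_valuation \<mu> (lsup Q le {x, y}) + measure_valuation \<mu> (linf Q le {x, y})"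
    using measure_valuation_qcls ab Un[OF ab(1,2)] Int[OF ab(1,2)] by auto
qed

end

context
  fixes L :: "'a measure"
  assumes L: "finite_measure L" "sets L = M" "N \<subseteq> null_sets L"
    and L_essential: "\<And>m. m \<in> M \<Longrightarrow> m \<notin> null_sets L \<Longrightarrow>
      \<exists>m'\<in>M. m' \<subseteq> m \<and> sigma_finite_set M N m' \<and> m' \<notin> null_sets L"
begin

interpretation L: finite_measure L by (fact L(1))

lemma null_sets_L_subset: "B \<in> null_sets L \<Longrightarrow> A \<in> M \<Longrightarrow> A \<subseteq> B \<Longrightarrow> A \<in> null_sets L"
  using null_set_Int1[of B L A] L(2) by (simp add: Int_absorb2)

lemma lub_exhausted:
  assumes I: "I \<subseteq> Q" "I \<noteq> {}" and lub: "is_lub Q le I (cl s)" and s: "s \<in> M"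
  obtains xs :: "nat \<Rightarrow> 'a set set" where "range xs \<subseteq> I" "s - (\<Union>n. rep (xs n)) \<in> null_sets L"
proof -
  have rep_M: "rep x \<in> M" if "x \<in> I" for x using that I(1) rep_in_quot(1) by blast
  have "(\<lambda>x. s \<inter> rep x) ` I \<subseteq> sets L" using s rep_M L(2) by auto
  then obtain xs :: "nat \<Rightarrow> 'a set set" where xs: "range xs \<subseteq> I"
    and exhausts: "\<And>x. x \<in> I \<Longrightarrow> s \<inter> rep x - (\<Union>n. s \<inter> rep (xs n)) \<in> null_sets L"
    by (rule L.exhausting_sequence[OF I(2)]) blast
  define T where "T = (\<Union>n. s \<inter> rep (xs n))"
  have T: "T \<in> M" unfolding T_def using s rep_M xs by blast
  (* A non-null residue would contain a \<sigma>-finite part m of positive measure; exhausting m with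
     its faithful measure shows m is covered by I up to N, but m meets every s \<inter> rep x only in
     a null set. *)
  have "s - T \<in> null_sets L"
  proof (rule ccontr)
    assume "s - T \<notin> null_sets L"
    then obtain m where m: "m \<in> M" "m \<subseteq> s - T" "sigma_finite_set M N m" "m \<notin> null_sets L"
      using L_essential s T by blast
    obtain Lm where Lm: "finite_measure Lm" "sets Lm = {t \<in> M. t \<subseteq> m}"
      and faithful: "\<And>E. E \<in> null_sets Lm \<Longrightarrow> E \<in> N"
      using sigma_finite_set_faithful_measure[OF m(3,1)] by blast
    have "(\<lambda>x. m \<inter> rep x) ` I \<subseteq> sets Lm" using m(1) rep_M Lm(2) by auto
    then obtain ys :: "nat \<Rightarrow> 'a set set" where ys: "range ys \<subseteq> I"
      and exhausts_m: "\<And>x. x \<in> I \<Longrightarrow> m \<inter> rep x - (\<Union>n. m \<inter> rep (ys n)) \<in> null_sets Lm"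
      by (rule finite_measure.exhausting_sequence[OF Lm(1) I(2)]) blast
    have residue: "(m - (\<Union>n. m \<inter> rep (ys n))) \<inter> rep x \<in> N" if "x \<in> I" for x
    proof -
      have "m \<inter> rep x - (\<Union>n. m \<inter> rep (ys n)) \<in> N" using faithful exhausts_m[OF that] .
      moreover have "(m - (\<Union>n. m \<inter> rep (ys n))) \<inter> rep x = m \<inter> rep x - (\<Union>n. m \<inter> rep (ys n))" by blast
      ultimately show ?thesis by simp
    qed
    have T': "(\<Union>n. m \<inter> rep (ys n)) \<in> M" using m(1) rep_M ys by blast
    have "m - (\<Union>n. m \<inter> rep (ys n)) \<in> N"
      using m(1,2) T' by (intro lub_null_residue[OF lub I(1) s _ _ residue]) auto
    then have "m - (\<Union>n. m \<inter> rep (ys n)) \<in> null_sets L" using L(3) by blast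
    moreover have "m \<inter> rep (ys n) \<in> null_sets L" for n
    proof (rule null_sets_L_subset)
      show "s \<inter> rep (ys n) - T \<in> null_sets L" using exhausts ys unfolding T_def by blast
      show "m \<inter> rep (ys n) \<in> M" using m(1) rep_M ys by blast
      show "m \<inter> rep (ys n) \<subseteq> s \<inter> rep (ys n) - T" using m(2) by blast
    qed
    then have "(\<Union>n. m \<inter> rep (ys n)) \<in> null_sets L" by blast
    ultimately have "(m - (\<Union>n. m \<inter> rep (ys n))) \<union> (\<Union>n. m \<inter> rep (ys n)) \<in> null_sets L" by blast
    then have "m \<in> null_sets L" by (rule null_sets_L_subset) (use m(1) in auto)
    with m(4) show False by contradiction
  qed
  moreover have "s - (\<Union>n. rep (xs n)) = s - T" unfolding T_def by blast
  ultimately show ?thesis using that xs by simp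
qed

lemma lub_approx:
  assumes dir: "directed_in Q le I" and lub: "is_lub Q le I (cl s)" and s: "s \<in> M" and e: "0 < e"
  shows "\<exists>x\<in>I. measure L (s - rep x) < e"
proof -
  have I: "I \<subseteq> Q" "I \<noteq> {}" using dir unfolding directed_in_def by auto
  then have rep_M: "rep x \<in> M" if "x \<in> I" for x using that rep_in_quot(1) by blast
  obtain xs :: "nat \<Rightarrow> 'a set set" where xs: "range xs \<subseteq> I" "s - (\<Union>n. rep (xs n)) \<in> null_sets L"
    by (rule lub_exhausted[OF I lub s])
  define D where "D n = s - (\<Union>k\<le>n. rep (xs k))" for n
  have "(\<Union>k\<le>n. rep (xs k)) \<in> M" for n using rep_M xs(1) by (intro finite_UN) auto
  then have D: "D n \<in> sets L" for n using s L(2) unfolding D_def by auto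
  have "decseq D" unfolding D_def decseq_def by auto
  then have "(\<lambda>n. measure L (D n)) \<longlonglongrightarrow> measure L (\<Inter>n. D n)"
    using D by (intro L.finite_Lim_measure_decseq) auto
  moreover have "(\<Inter>n. D n) = s - (\<Union>n. rep (xs n))" unfolding D_def by auto
  moreover have "measure L (s - (\<Union>n. rep (xs n))) = 0" using null_setsD1[OF xs(2)] by (simp add: measure_def)
  ultimately have "(\<lambda>n. measure L (D n)) \<longlonglongrightarrow> 0" by simp
  then have "eventually (\<lambda>n. measure L (D n) < e) sequentially" using e by (rule order_tendstoD(2))
  then obtain n where n: "measure L (D n) < e" by (auto simp: eventually_sequentially)
  obtain z where z: "z \<in> I" "\<forall>x\<in>xs ` {..n}. le x z"
    using directed_in_finite_ub[OF dir, of "xs ` {..n}"] xs(1) by blast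
  have "rep (xs k) - rep z \<in> N" if "k \<le> n" for k
  proof -
    have "xs k \<in> Q" "z \<in> Q" using xs(1) z(1) I(1) by auto
    moreover have "le (xs k) z" using z(2) that by auto
    ultimately show ?thesis using qle_rep_iff by blast
  qed
  then have "(\<Union>k\<le>n. rep (xs k) - rep z) \<in> N" by (intro null_finite_UN) auto
  then have null: "(\<Union>k\<le>n. rep (xs k) - rep z) \<in> null_sets L" using L(3) by blast
  have "measure L (s - rep z) \<le> measure L (D n \<union> (\<Union>k\<le>n. rep (xs k) - rep z))"
    using D null by (intro L.finite_measure_mono) (auto simp: D_def)
  also have "\<dots> = measure L (D n)"
    using D null by (intro measure_Un_null_set)
  finally have "measure L (s - rep z) < e" using n by linarith
  then show ?thesis using z(1) by blast
qed

end

context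
  fixes \<mu> :: "'a set \<Rightarrow> complex"
  assumes \<mu>: "finite_measure_on M N \<mu>" and essential: "essential M N \<mu>"
begin

lemma essential_control_measure:
  obtains L where "finite_measure L" "sets L = M" "\<And>E. E \<in> M \<Longrightarrow> cmod (\<mu> E) \<le> measure L E"
    "N \<subseteq> null_sets L"
    "\<And>m. m \<in> M \<Longrightarrow> m \<notin> null_sets L \<Longrightarrow> \<exists>m'\<in>M. m' \<subseteq> m \<and> sigma_finite_set M N m' \<and> m' \<notin> null_sets L"
proof -
  obtain L where L: "finite_measure L" "sets L = M" "\<And>E. E \<in> M \<Longrightarrow> cmod (\<mu> E) \<le> measure L E"
    "null_sets L = {E \<in> M. restr_zero M \<mu> E}"
    using complex_sigma_additive_dominating_measure[OF sigma_algebra_axioms] \<mu>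
    unfolding finite_measure_on_iff by blast
  show ?thesis
  proof (rule that[OF L(1-3)])
    show "N \<subseteq> null_sets L"
      using L(4) null_sets_M null_subset measure_null[OF \<mu>] unfolding restr_zero_def by blast
    show "\<exists>m'\<in>M. m' \<subseteq> m \<and> sigma_finite_set M N m' \<and> m' \<notin> null_sets L"
      if "m \<in> M" "m \<notin> null_sets L" for m
      using essential that L(4) unfolding essential_def by auto
  qed
qed

lemma measure_valuation_continuous:
  assumes complete: "quot_complete M N" and dir: "directed_in Q le I"
  shows "(measure_valuation \<mu> \<longlongrightarrow> measure_valuation \<mu> (lsup Q le I)) (directed_filter le I)"
proof -
  have I: "I \<subseteq> Q" using dir unfolding directed_in_def by blast
  obtain s0 where lub0: "is_lub Q le I s0" using complete I unfolding quot_complete_def by blast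
  then have s0: "s0 \<in> Q" "lsup Q le I = s0" using lsup_eqI[OF order_refl] unfolding is_lub_def by auto
  define s where "s = rep s0"
  have s: "s \<in> M" "cl s = s0" unfolding s_def using rep_in_quot[OF s0(1)] by auto
  have lub: "is_lub Q le I (cl s)" using lub0 s(2) by simp
  obtain L where L: "finite_measure L" "sets L = M" "\<And>E. E \<in> M \<Longrightarrow> cmod (\<mu> E) \<le> measure L E"
    and L_N: "N \<subseteq> null_sets L"
    and L_essential: "\<And>m. m \<in> M \<Longrightarrow> m \<notin> null_sets L \<Longrightarrow>
      \<exists>m'\<in>M. m' \<subseteq> m \<and> sigma_finite_set M N m' \<and> m' \<notin> null_sets L"
    using essential_control_measure by blast
  interpret L: finite_measure L by (fact L(1))
  show ?thesis
    unfolding s0(2)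
  proof (rule tendstoI)
    fix e :: real assume "0 < e"
    then obtain x where x: "x \<in> I" "measure L (s - rep x) < e"
      using lub_approx[OF L(1,2) L_N L_essential dir lub s(1)] by blast
    have "dist (measure_valuation \<mu> y) (measure_valuation \<mu> s0) < e" if y: "y \<in> I" "le x y" for y
    proof -
      have yQ: "y \<in> Q" and xQ: "x \<in> Q" using x(1) y(1) I by auto
      have "le y s0" using lub0 y(1) unfolding is_lub_def by blast
      then have "dist (measure_valuation \<mu> y) (measure_valuation \<mu> s0) = cmod (\<mu> (s - rep y))"
        using measure_valuation_diff[OF \<mu> s0(1) yQ] unfolding s_def by (simp add: dist_norm norm_minus_commute)
      also have "\<dots> \<le> measure L (s - rep y)"
        using L(3) s(1) rep_in_quot(1)[OF yQ] by blast
      also have "\<dots> \<le> measure L ((s - rep x) \<union> (rep x - rep y))"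
        using s(1) rep_in_quot(1)[OF xQ] rep_in_quot(1)[OF yQ] L(2)
        by (intro L.finite_measure_mono) auto
      also have "\<dots> = measure L (s - rep x)"
        using qle_rep_iff[OF xQ yQ] y(2) L_N s(1) rep_in_quot(1)[OF xQ] L(2)
        by (intro measure_Un_null_set) auto
      finally show ?thesis using x(2) by simp
    qed
    then show "eventually (\<lambda>y. dist (measure_valuation \<mu> y) (measure_valuation \<mu> s0) < e) (directed_filter le I)"
      unfolding eventually_directed_filter_quot[OF dir] using x(1) by blast
  qed
qed

end

end

theorem mainTheorem14:
  fixes X :: "'a set" and M N :: "'a set set"
  assumes "enhanced_measurable_space X M N"
    and "localizable X M N"
  shows "bij_betw (\<lambda>\<nu>. \<lambda>m\<in>M. \<nu> (qcls M N m))
           {\<nu> \<in> quot M N \<rightarrow>\<^sub>E (UNIV :: complex set). continuous_valuation_on (quot M N) (qle N) \<nu>}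
           {\<mu> \<in> M \<rightarrow>\<^sub>E (UNIV :: complex set). finite_measure_on M N \<mu> \<and> essential M N \<mu>}"
proof -
  interpret enhanced_space X M N by unfold_locales (fact assms(1))
  have complete: "quot_complete M N" using assms(2) unfolding localizable_def by blast
  show ?thesis
  proof (rule bij_betw_byWitness[where f' = measure_valuation])
    show "(\<lambda>\<nu>. \<lambda>m\<in>M. \<nu> (cl m)) ` {\<nu> \<in> Q \<rightarrow>\<^sub>E UNIV. continuous_valuation_on Q le \<nu>}
        \<subseteq> {\<mu> \<in> M \<rightarrow>\<^sub>E UNIV. finite_measure_on M N \<mu> \<and> essential M N \<mu>}"
      using continuous_valuation_finite_measure continuous_valuation_essential[OF assms(2)] by auto
    show "measure_valuation ` {\<mu> \<in> M \<rightarrow>\<^sub>E UNIV. finite_measure_on M N \<mu> \<and> essential M N \<mu>}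
        \<subseteq> {\<nu> \<in> Q \<rightarrow>\<^sub>E UNIV. continuous_valuation_on Q le \<nu>}"
      using valuation_measure_valuation measure_valuation_continuous[OF _ _ complete]
      by (auto simp: continuous_valuation_on_def measure_valuation_def)
  qed (auto simp: measure_valuation_restrict measure_valuation_image)
qed

end
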